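(* Let $k,\ell$ be positive integers. A matroid $M$ is $(k,\ell)$-uniform if and only if every rank-$(r(M)-k)$ flat of $M$ has nullity less than $\ell$.
   Context: A matroid is $(k,\ell)$-uniform if it has no minor isomorphic to $U_{k,k}\oplus U_{0,\ell}$. The nullity of a set $X$ in $M$ is $|X|-r_M(X)$. *)

theory Defs
  imports Main
begin

definition matroid :: "'a set \<Rightarrow> ('a set \<Rightarrow> bool) \<Rightarrow> bool" where
  "matroid E indep \<longleftrightarrow>
     finite E \<and> indep {} \<and>
     (\<forall>I. indep I \<longrightarrow> I \<subseteq> E) \<and>
     (\<forall>I J. indep I \<and> J \<subseteq> I \<longrightarrow> indep J) \<and>
     (\<forall>I J. indep I \<and> indep J \<and> card I < card J \<longrightarrow>
        (\<exists>x \<in> J - I. indep (insert x I)))"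

definition rank_of :: "('a set \<Rightarrow> bool) \<Rightarrow> 'a set \<Rightarrow> nat" where
  "rank_of indep A = Max (card ` {I. I \<subseteq> A \<and> indep I})"

definition nullity :: "('a set \<Rightarrow> bool) \<Rightarrow> 'a set \<Rightarrow> nat" where
  "nullity indep X = card X - rank_of indep X"

definition flat :: "'a set \<Rightarrow> ('a set \<Rightarrow> bool) \<Rightarrow> 'a set \<Rightarrow> bool" where
  "flat E indep F \<longleftrightarrow> F \<subseteq> E \<and>
     (\<forall>x \<in> E - F. rank_of indep (insert x F) > rank_of indep F)"

text \<open>Independent sets of the minor M / C \ D (ground set X = E - (C \<union> D)):
  I is independent iff I \<subseteq> X and r(I \<union> C) = |I| + r(C).\<close>
definition minor_indep :: "('a set \<Rightarrow> bool) \<Rightarrow> 'a set \<Rightarrow> 'a set \<Rightarrow> 'a set \<Rightarrow> bool" where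
  "minor_indep indep C X I \<longleftrightarrow> I \<subseteq> X \<and> rank_of indep (I \<union> C) = card I + rank_of indep C"

definition is_minor :: "'a set \<Rightarrow> ('a set \<Rightarrow> bool) \<Rightarrow> 'a set \<Rightarrow> ('a set \<Rightarrow> bool) \<Rightarrow> bool" where
  "is_minor E' indep' E indep \<longleftrightarrow>
     (\<exists>C D. C \<subseteq> E \<and> D \<subseteq> E \<and> C \<inter> D = {} \<and> E' = E - (C \<union> D) \<and>
            indep' = minor_indep indep C E')"

definition matroid_iso :: "'a set \<Rightarrow> ('a set \<Rightarrow> bool) \<Rightarrow> 'b set \<Rightarrow> ('b set \<Rightarrow> bool) \<Rightarrow> bool" where
  "matroid_iso E1 indep1 E2 indep2 \<longleftrightarrow>
     (\<exists>f. bij_betw f E1 E2 \<and> (\<forall>I \<subseteq> E1. indep1 I \<longleftrightarrow> indep2 (f ` I)))"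

text \<open>U_{k,k} \<oplus> U_{0,l} on ground set {0..<k+l}: elements 0..k-1 are coloops,
  elements k..k+l-1 are loops.\<close>
definition Ukk_sum_U0l_ground :: "nat \<Rightarrow> nat \<Rightarrow> nat set" where
  "Ukk_sum_U0l_ground k l = {0..<k+l}"

definition Ukk_sum_U0l_indep :: "nat \<Rightarrow> nat \<Rightarrow> nat set \<Rightarrow> bool" where
  "Ukk_sum_U0l_indep k l I \<longleftrightarrow> I \<subseteq> {0..<k}"

definition kl_uniform :: "nat \<Rightarrow> nat \<Rightarrow> 'a set \<Rightarrow> ('a set \<Rightarrow> bool) \<Rightarrow> bool" where
  "kl_uniform k l E indep \<longleftrightarrow>
     \<not> (\<exists>E' indep'. is_minor E' indep' E indep \<and>
          matroid_iso E' indep' (Ukk_sum_U0l_ground k l) (Ukk_sum_U0l_indep k l))"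

end

theory Submission
  imports Defs
begin

(* If F has rank r(M) - k and nullity at least l, contract a basis B_F of F and extend B_F
   to a basis B of M: the k elements of B - B_F become coloops and any l elements of F - B_F
   become loops of the contraction.  Conversely, if M / C restricted to K \<union> L has the coloops
   K and the loops L, extend K together with a basis of C to a basis B of M; the closure of
   B - K is a flat of rank r(M) - k containing the l loops, none of which lies in B - K. *)

lemma ex_bij_betw_Un_lessThan_card:
  assumes "finite K" "finite L" "K \<inter> L = {}"
  obtains f where "bij_betw f (K \<union> L) {0..<card K + card L}"
    and "\<forall>x \<in> K \<union> L. f x < card K \<longleftrightarrow> x \<in> K"
proof -
  obtain g where g: "bij_betw g K {0..<card K}"
    using bij_betw_iff_card[OF assms(1), of "{0..<card K}"] by auto
  obtain h where h: "bij_betw h L {card K..<card K + card L}"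
    using bij_betw_iff_card[OF assms(2), of "{card K..<card K + card L}"] by auto
  define f where "f x = (if x \<in> K then g x else h x)" for x
  have "bij_betw f K {0..<card K}"
    using g by (rule bij_betw_cong[THEN iffD1, rotated]) (simp add: f_def)
  moreover have "bij_betw f L {card K..<card K + card L}"
    using h by (rule bij_betw_cong[THEN iffD1, rotated]) (use assms(3) in \<open>auto simp: f_def\<close>)
  ultimately have "bij_betw f (K \<union> L) ({0..<card K} \<union> {card K..<card K + card L})"
    by (rule bij_betw_combine) auto
  moreover have "{0..<card K} \<union> {card K..<card K + card L} = {0..<card K + card L}"
    by auto
  ultimately have "bij_betw f (K \<union> L) {0..<card K + card L}"
    by simp
  moreover have "\<forall>x \<in> K \<union> L. f x < card K \<longleftrightarrow> x \<in> K"
    using bij_betwE[OF g] bij_betwE[OF h] assms(3) by (auto simp: f_def)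
  ultimately show ?thesis
    by (rule that)
qed

lemma matroid_iso_Ukk_sum_U0l_iff:
  "matroid_iso X indep' (Ukk_sum_U0l_ground k l) (Ukk_sum_U0l_indep k l) \<longleftrightarrow>
   (\<exists>K L. finite X \<and> X = K \<union> L \<and> K \<inter> L = {} \<and> card K = k \<and> card L = l \<and>
      (\<forall>I \<subseteq> X. indep' I \<longleftrightarrow> I \<subseteq> K))"
proof
  assume "matroid_iso X indep' (Ukk_sum_U0l_ground k l) (Ukk_sum_U0l_indep k l)"
  then obtain f where f: "bij_betw f X {0..<k+l}"
    and f_indep: "\<forall>I \<subseteq> X. indep' I \<longleftrightarrow> f ` I \<subseteq> {0..<k}"
    unfolding matroid_iso_def Ukk_sum_U0l_ground_def Ukk_sum_U0l_indep_def
    by (elim exE conjE) (rule that)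
  define K where "K = {x \<in> X. f x < k}"
  have "f ` K = {n \<in> f ` X. n < k}"
    by (auto simp: K_def)
  also have "\<dots> = {0..<k}"
    using bij_betw_imp_surj_on[OF f] by auto
  finally have "bij_betw f K {0..<k}"
    using bij_betw_subset[OF f, of K] by (simp add: K_def)
  then have card_K: "card K = k"
    by (simp add: bij_betw_same_card)
  have fin: "finite X" and card_X: "card X = k + l"
    using f by (auto simp: bij_betw_finite bij_betw_same_card)
  have "K \<subseteq> X"
    by (auto simp: K_def)
  with fin have "card (X - K) = l"
    by (simp add: card_Diff_subset finite_subset card_K card_X)
  moreover have "f ` I \<subseteq> {0..<k} \<longleftrightarrow> I \<subseteq> K" if "I \<subseteq> X" for I
    using that by (auto simp: K_def image_subset_iff)
  with f_indep have "\<forall>I \<subseteq> X. indep' I \<longleftrightarrow> I \<subseteq> K"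
    by simp
  moreover have "X = K \<union> (X - K)"
    using \<open>K \<subseteq> X\<close> by auto
  ultimately show "\<exists>K L. finite X \<and> X = K \<union> L \<and> K \<inter> L = {} \<and> card K = k \<and> card L = l \<and>
      (\<forall>I \<subseteq> X. indep' I \<longleftrightarrow> I \<subseteq> K)"
    using fin card_K by (intro exI[of _ K] exI[of _ "X - K"]) simp
next
  assume "\<exists>K L. finite X \<and> X = K \<union> L \<and> K \<inter> L = {} \<and> card K = k \<and> card L = l \<and>
      (\<forall>I \<subseteq> X. indep' I \<longleftrightarrow> I \<subseteq> K)"
  then obtain K L where X: "finite X" "X = K \<union> L" "K \<inter> L = {}" "card K = k" "card L = l"
    and indep': "\<forall>I \<subseteq> X. indep' I \<longleftrightarrow> I \<subseteq> K"
    by (elim exE conjE) (rule that)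
  obtain f where f: "bij_betw f X {0..<k+l}" and f_K: "\<forall>x \<in> X. f x < k \<longleftrightarrow> x \<in> K"
    using ex_bij_betw_Un_lessThan_card[of K L] X by auto
  then have "f ` I \<subseteq> {0..<k} \<longleftrightarrow> I \<subseteq> K" if "I \<subseteq> X" for I
    using that by (auto simp: image_subset_iff)
  with indep' have "\<forall>I \<subseteq> X. indep' I \<longleftrightarrow> f ` I \<subseteq> {0..<k}"
    by simp
  with f show "matroid_iso X indep' (Ukk_sum_U0l_ground k l) (Ukk_sum_U0l_indep k l)"
    unfolding matroid_iso_def Ukk_sum_U0l_ground_def Ukk_sum_U0l_indep_def by blast
qed

lemma is_minor_iff:
  "is_minor X indep' E indep \<longleftrightarrow> (\<exists>C. C \<subseteq> E \<and> X \<subseteq> E - C \<and> indep' = minor_indep indep C X)"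
proof
  assume "\<exists>C. C \<subseteq> E \<and> X \<subseteq> E - C \<and> indep' = minor_indep indep C X"
  then obtain C where "C \<subseteq> E" "X \<subseteq> E - C" "indep' = minor_indep indep C X"
    by blast
  then show "is_minor X indep' E indep"
    unfolding is_minor_def by (intro exI[of _ C] exI[of _ "E - C - X"]) auto
qed (auto simp: is_minor_def)

locale finite_matroid =
  fixes E :: "'a set" and indep :: "'a set \<Rightarrow> bool"
  assumes matroid: "matroid E indep"
begin

lemma finite_ground: "finite E"
  using matroid by (simp add: matroid_def)

lemma indep_empty: "indep {}"
  using matroid by (simp add: matroid_def)

lemma indep_subset_ground: "indep I \<Longrightarrow> I \<subseteq> E"
  using matroid by (simp add: matroid_def)

lemma indep_subset: "indep I \<Longrightarrow> J \<subseteq> I \<Longrightarrow> indep J"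
  using matroid unfolding matroid_def by blast

lemma indep_augment:
  "indep I \<Longrightarrow> indep J \<Longrightarrow> card I < card J \<Longrightarrow> \<exists>x \<in> J - I. indep (insert x I)"
  using matroid unfolding matroid_def by blast

lemma indep_finite: "indep I \<Longrightarrow> finite I"
  using finite_ground indep_subset_ground finite_subset by blast

definition basis_of :: "'a set \<Rightarrow> 'a set \<Rightarrow> bool" where
  "basis_of A B \<longleftrightarrow> B \<subseteq> A \<and> indep B \<and> card B = rank_of indep A"

lemma finite_indep_cards: "finite (card ` {I. I \<subseteq> A \<and> indep I})"
proof -
  have "{I. I \<subseteq> A \<and> indep I} \<subseteq> Pow E"
    using indep_subset_ground by auto
  then show ?thesis
    using finite_ground by (simp add: finite_subset)
qed

lemma card_le_rank:
  assumes "I \<subseteq> A" "indep I"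
  shows "card I \<le> rank_of indep A"
  unfolding rank_of_def by (rule Max_ge[OF finite_indep_cards]) (use assms in blast)

lemma ex_basis_of: "\<exists>B. basis_of A B"
proof -
  have "card ` {I. I \<subseteq> A \<and> indep I} \<noteq> {}"
    using indep_empty by auto
  then have "rank_of indep A \<in> card ` {I. I \<subseteq> A \<and> indep I}"
    unfolding rank_of_def using finite_indep_cards by (rule Max_in[rotated])
  then show ?thesis
    by (auto simp: basis_of_def)
qed

lemma rank_indep: "indep I \<Longrightarrow> rank_of indep I = card I"
proof -
  assume "indep I"
  obtain B where "basis_of I B"
    using ex_basis_of by blast
  then have "rank_of indep I = card B" "B \<subseteq> I"
    by (simp_all add: basis_of_def)
  then have "rank_of indep I \<le> card I"
    using indep_finite[OF \<open>indep I\<close>] by (simp add: card_mono)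
  with \<open>indep I\<close> show ?thesis
    using card_le_rank[of I I] by simp
qed

lemma rank_mono:
  assumes "A \<subseteq> A'"
  shows "rank_of indep A \<le> rank_of indep A'"
proof -
  obtain B where B: "basis_of A B"
    using ex_basis_of by blast
  then have "card B \<le> rank_of indep A'"
    using assms by (intro card_le_rank) (auto simp: basis_of_def)
  with B show ?thesis
    by (simp add: basis_of_def)
qed

lemma rank_insert_le: "rank_of indep (insert x A) \<le> Suc (rank_of indep A)"
proof -
  obtain B where B: "basis_of (insert x A) B"
    using ex_basis_of by blast
  then have "card (B - {x}) \<le> rank_of indep A"
    by (auto simp: basis_of_def intro: card_le_rank indep_subset)
  moreover have "card B \<le> Suc (card (B - {x}))"
    using B indep_finite by (cases "x \<in> B") (auto simp: basis_of_def card_Suc_Diff1)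
  ultimately show ?thesis
    using B by (simp add: basis_of_def)
qed

lemma rank_union_le_card: "finite A \<Longrightarrow> rank_of indep (A \<union> X) \<le> card A + rank_of indep X"
proof (induction A rule: finite_induct)
  case (insert x A)
  have "rank_of indep (insert x A \<union> X) \<le> Suc (rank_of indep (A \<union> X))"
    using rank_insert_le by simp
  with insert show ?case
    by simp
qed simp

lemma rank_eq_card_if_maximal:
  assumes "indep I" "I \<subseteq> A" and maximal: "\<forall>x \<in> A - I. \<not> indep (insert x I)"
  shows "rank_of indep A = card I"
proof -
  obtain B where B: "basis_of A B"
    using ex_basis_of by blast
  have "\<not> card I < card B"
    using indep_augment[OF \<open>indep I\<close>] B maximal by (fastforce simp: basis_of_def)
  with B assms show ?thesis
    using card_le_rank[of I A] by (simp add: basis_of_def)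
qed

lemma ex_basis_superset: "indep I \<Longrightarrow> \<exists>B. basis_of E B \<and> I \<subseteq> B"
proof (induction "rank_of indep E - card I" arbitrary: I rule: less_induct)
  case less
  show ?case
  proof (cases "card I < rank_of indep E")
    case True
    obtain B where "basis_of E B"
      using ex_basis_of by blast
    with True obtain x where x: "x \<in> B - I" "indep (insert x I)"
      using indep_augment[OF less.prems, of B] by (auto simp: basis_of_def)
    then have "rank_of indep E - card (insert x I) < rank_of indep E - card I"
      using True indep_finite[OF less.prems] by simp
    from less.hyps[OF this x(2)] show ?thesis
      by blast
  next
    case False
    then have "basis_of E I"
      using less.prems card_le_rank[OF indep_subset_ground less.prems]
      by (simp add: basis_of_def indep_subset_ground)
    then show ?thesis
      by blast
  qed
qed

definition span :: "'a set \<Rightarrow> 'a set" where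
  "span I = {y \<in> E. y \<in> I \<or> \<not> indep (insert y I)}"

lemma rank_span: "indep I \<Longrightarrow> rank_of indep (span I) = card I"
  by (rule rank_eq_card_if_maximal) (auto simp: span_def dest: indep_subset_ground)

lemma flat_span:
  assumes "indep I"
  shows "flat E indep (span I)"
  unfolding flat_def
proof (intro conjI ballI)
  show "span I \<subseteq> E"
    by (auto simp: span_def)
next
  fix x
  assume "x \<in> E - span I"
  then have "indep (insert x I)" "x \<notin> I"
    by (auto simp: span_def)
  moreover have "I \<subseteq> span I"
    using indep_subset_ground[OF assms] by (auto simp: span_def)
  ultimately have "card (insert x I) \<le> rank_of indep (insert x (span I))"
    by (intro card_le_rank) auto
  with \<open>x \<notin> I\<close> show "rank_of indep (span I) < rank_of indep (insert x (span I))"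
    using rank_span[OF assms] indep_finite[OF assms] by simp
qed

lemma not_indep_insert_basis:
  assumes "basis_of C B" "rank_of indep (insert y C) = rank_of indep C" "y \<notin> B"
  shows "\<not> indep (insert y B)"
proof
  assume "indep (insert y B)"
  then have "card (insert y B) \<le> rank_of indep (insert y C)"
    using assms(1) by (intro card_le_rank) (auto simp: basis_of_def)
  with assms show False
    using indep_finite by (simp add: basis_of_def)
qed

lemma ex_basis_indep_union:
  assumes "finite K" "rank_of indep (K \<union> C) = card K + rank_of indep C"
  obtains B where "basis_of C B" "indep (K \<union> B)"
proof -
  obtain J where J: "basis_of (K \<union> C) J"
    using ex_basis_of by blast
  have "J = (J \<inter> K) \<union> (J \<inter> C)"
    using J by (auto simp: basis_of_def)
  then have "card J \<le> card (J \<inter> K) + card (J \<inter> C)"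
    by (metis card_Un_le)
  moreover have "card (J \<inter> K) \<le> card K"
    using assms(1) by (simp add: card_mono)
  moreover have "card (J \<inter> C) \<le> rank_of indep C"
    using J by (auto simp: basis_of_def intro: card_le_rank indep_subset)
  ultimately have "card (J \<inter> K) = card K" "card (J \<inter> C) = rank_of indep C"
    using J assms(2) by (auto simp: basis_of_def)
  then have "K \<subseteq> J"
    using card_subset_eq[OF assms(1), of "J \<inter> K"] by auto
  then have "K \<union> (J \<inter> C) = J"
    using J by (auto simp: basis_of_def)
  then show ?thesis
    using J \<open>card (J \<inter> C) = rank_of indep C\<close>
    by (intro that[of "J \<inter> C"]) (auto simp: basis_of_def intro: indep_subset)
qed

(* The minor M / C restricted to K \<union> L is U_{|K|,|K|} + U_{0,|L|}: K consists of its coloops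
   and L of its loops. *)

definition coloops_loops_minor :: "'a set \<Rightarrow> 'a set \<Rightarrow> 'a set \<Rightarrow> bool" where
  "coloops_loops_minor C K L \<longleftrightarrow> C \<subseteq> E \<and> K \<union> L \<subseteq> E - C \<and> K \<inter> L = {} \<and>
     (\<forall>I \<subseteq> K \<union> L. rank_of indep (I \<union> C) = card I + rank_of indep C \<longleftrightarrow> I \<subseteq> K)"

lemma not_kl_uniform_iff:
  "\<not> kl_uniform k l E indep \<longleftrightarrow> (\<exists>C K L. coloops_loops_minor C K L \<and> card K = k \<and> card L = l)"
proof
  assume "\<not> kl_uniform k l E indep"
  then obtain X C K L where C: "C \<subseteq> E" "X \<subseteq> E - C"
    and X: "X = K \<union> L" "K \<inter> L = {}" "card K = k" "card L = l"
    and indep': "\<forall>I \<subseteq> X. minor_indep indep C X I \<longleftrightarrow> I \<subseteq> K"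
    unfolding kl_uniform_def is_minor_iff matroid_iso_Ukk_sum_U0l_iff by blast
  have "coloops_loops_minor C K L"
    unfolding coloops_loops_minor_def
  proof (intro conjI allI impI)
    fix I
    assume "I \<subseteq> K \<union> L"
    with indep' X(1) show "rank_of indep (I \<union> C) = card I + rank_of indep C \<longleftrightarrow> I \<subseteq> K"
      by (simp add: minor_indep_def)
  qed (use C X in auto)
  with X show "\<exists>C K L. coloops_loops_minor C K L \<and> card K = k \<and> card L = l"
    by blast
next
  assume "\<exists>C K L. coloops_loops_minor C K L \<and> card K = k \<and> card L = l"
  then obtain C K L where minor: "coloops_loops_minor C K L" and card: "card K = k" "card L = l"
    by blast
  then have "finite (K \<union> L)"
    using finite_ground by (auto simp: coloops_loops_minor_def intro: finite_subset)
  moreover have "\<forall>I \<subseteq> K \<union> L. minor_indep indep C (K \<union> L) I \<longleftrightarrow> I \<subseteq> K"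
    using minor by (auto simp: coloops_loops_minor_def minor_indep_def)
  ultimately have "matroid_iso (K \<union> L) (minor_indep indep C (K \<union> L))
      (Ukk_sum_U0l_ground k l) (Ukk_sum_U0l_indep k l)"
    using minor card by (auto simp: matroid_iso_Ukk_sum_U0l_iff coloops_loops_minor_def)
  moreover have "is_minor (K \<union> L) (minor_indep indep C (K \<union> L)) E indep"
    using minor by (auto simp: is_minor_iff coloops_loops_minor_def)
  ultimately show "\<not> kl_uniform k l E indep"
    unfolding kl_uniform_def by blast
qed

lemma coloops_loops_minor_of_basis_extension:
  assumes "F \<subseteq> E" "basis_of F BF" "basis_of E B" "BF \<subseteq> B" "L \<subseteq> F - BF"
  shows "coloops_loops_minor BF (B - BF) L"
proof -
  have disjoint: "(B - BF) \<inter> F = {}"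
  proof (rule ccontr)
    assume "(B - BF) \<inter> F \<noteq> {}"
    then obtain y where y: "y \<in> B - BF" "y \<in> F"
      by blast
    then have "card (insert y BF) \<le> rank_of indep F"
      using assms(2,3,4) by (intro card_le_rank) (auto simp: basis_of_def intro: indep_subset[of B])
    with y assms(2) show False
      using indep_finite by (simp add: basis_of_def)
  qed
  have rank_BF: "rank_of indep BF = card BF"
    using assms(2) rank_indep by (simp add: basis_of_def)
  have "rank_of indep (I \<union> BF) = card I + rank_of indep BF \<longleftrightarrow> I \<subseteq> B - BF"
    if I: "I \<subseteq> (B - BF) \<union> L" for I
  proof
    have "I \<subseteq> E"
      using I assms unfolding basis_of_def by blast
    then have "finite I"
      using finite_ground by (rule finite_subset)
    assume rank_I: "rank_of indep (I \<union> BF) = card I + rank_of indep BF"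
    show "I \<subseteq> B - BF"
    proof (rule ccontr)
      assume "\<not> I \<subseteq> B - BF"
      have "rank_of indep (I \<union> BF) \<le> rank_of indep ((I \<inter> (B - BF)) \<union> F)"
        using I assms(2,5) by (intro rank_mono) (auto simp: basis_of_def)
      also have "\<dots> \<le> card (I \<inter> (B - BF)) + rank_of indep F"
        using \<open>finite I\<close> by (intro rank_union_le_card) simp
      also have "\<dots> < card I + rank_of indep BF"
        using \<open>finite I\<close> \<open>\<not> I \<subseteq> B - BF\<close> assms(2) rank_BF
        by (auto simp: basis_of_def intro!: psubset_card_mono)
      finally show False
        using rank_I by simp
    qed
  next
    assume "I \<subseteq> B - BF"
    then have "indep (I \<union> BF)"
      using assms(3,4) by (auto simp: basis_of_def intro: indep_subset)
    moreover have "I \<inter> BF = {}"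
      using \<open>I \<subseteq> B - BF\<close> by blast
    ultimately show "rank_of indep (I \<union> BF) = card I + rank_of indep BF"
      using rank_BF indep_finite[of "I \<union> BF"] by (simp add: rank_indep card_Un_disjoint)
  qed
  with assms disjoint show ?thesis
    unfolding coloops_loops_minor_def basis_of_def
    using indep_subset_ground by blast
qed

lemma coloops_loops_minor_of_rank_deficient:
  assumes "F \<subseteq> E" "rank_of indep F + k = rank_of indep E" "l \<le> nullity indep F"
  shows "\<exists>C K L. coloops_loops_minor C K L \<and> card K = k \<and> card L = l"
proof -
  obtain BF where BF: "basis_of F BF"
    using ex_basis_of by blast
  then have "indep BF"
    by (simp add: basis_of_def)
  then obtain B where B: "basis_of E B" "BF \<subseteq> B"
    using ex_basis_superset by blast
  have "card (B - BF) = k"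
    using B BF assms(2) by (simp add: basis_of_def card_Diff_subset indep_finite finite_subset)
  moreover have "card (F - BF) = nullity indep F"
    using BF \<open>indep BF\<close> by (simp add: basis_of_def nullity_def card_Diff_subset indep_finite)
  then obtain L where "L \<subseteq> F - BF" "card L = l"
    using assms(3) obtain_subset_with_card_n by metis
  ultimately show ?thesis
    using coloops_loops_minor_of_basis_extension[OF assms(1) BF B] by blast
qed

lemma rank_insert_loop:
  assumes "coloops_loops_minor C K L" "y \<in> L"
  shows "rank_of indep (insert y C) = rank_of indep C"
proof -
  have "y \<notin> K"
    using assms by (auto simp: coloops_loops_minor_def)
  with assms have "rank_of indep ({y} \<union> C) \<noteq> card {y} + rank_of indep C"
    unfolding coloops_loops_minor_def by blast
  with rank_insert_le[of y C] rank_mono[OF subset_insertI, of C y] show ?thesis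
    by simp
qed

lemma flat_of_coloops_loops_minor:
  assumes minor: "coloops_loops_minor C K L"
  shows "\<exists>F. flat E indep F \<and> rank_of indep F + card K = rank_of indep E \<and>
    card L \<le> nullity indep F"
proof -
  have KL: "C \<subseteq> E" "K \<union> L \<subseteq> E - C" "K \<inter> L = {}"
    using minor by (auto simp: coloops_loops_minor_def)
  then have "finite K" "finite L"
    using finite_ground by (auto intro: finite_subset)
  moreover have "rank_of indep (K \<union> C) = card K + rank_of indep C"
    using minor by (simp add: coloops_loops_minor_def)
  ultimately obtain BC where BC: "basis_of C BC" "indep (K \<union> BC)"
    using ex_basis_indep_union by blast
  then obtain B where B: "basis_of E B" "K \<union> BC \<subseteq> B"
    using ex_basis_superset by blast
  define F0 where "F0 = B - K"
  have "K \<subseteq> B" "indep B" "finite B"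
    using B indep_finite by (auto simp: basis_of_def)
  then have F0: "indep F0" "card F0 + card K = rank_of indep E" "BC \<subseteq> F0"
    using B(1) B(2) BC KL \<open>finite K\<close> card_mono[of B K]
    by (auto simp: F0_def basis_of_def card_Diff_subset intro: indep_subset[of B])
  have "y \<in> span F0 - F0" if "y \<in> L" for y
  proof -
    have "\<not> indep (insert y BC)"
      using BC(1) rank_insert_loop[OF minor that] that KL
      by (intro not_indep_insert_basis) (auto simp: basis_of_def)
    then have "y \<notin> F0" "\<not> indep (insert y F0)"
      using F0 by (auto intro: indep_subset)
    with that KL show ?thesis
      by (auto simp: span_def)
  qed
  then have "card F0 + card L \<le> card (span F0)"
    using F0 \<open>finite L\<close> finite_ground
    by (subst card_Un_disjoint[symmetric])
       (auto simp: span_def indep_finite intro!: card_mono dest: indep_subset_ground)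
  then have "card L \<le> nullity indep (span F0)"
    using rank_span[OF F0(1)] by (simp add: nullity_def)
  with flat_span[OF F0(1)] rank_span[OF F0(1)] F0(2) show ?thesis
    by auto
qed

end

theorem proposition1p4:
  fixes E :: "'a set" and indep :: "'a set \<Rightarrow> bool" and k l :: nat
  assumes "matroid E indep" and "0 < k" and "0 < l"
  shows "kl_uniform k l E indep \<longleftrightarrow>
    (\<forall>F. flat E indep F \<and> rank_of indep F + k = rank_of indep E
         \<longrightarrow> nullity indep F < l)"
proof -
  interpret finite_matroid E indep
    by (rule finite_matroid.intro) (rule assms(1))
  have "\<not> kl_uniform k l E indep \<longleftrightarrow>
      (\<exists>F. flat E indep F \<and> rank_of indep F + k = rank_of indep E \<and> \<not> nullity indep F < l)"
  proof
    assume "\<not> kl_uniform k l E indep"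
    then obtain C K L where "coloops_loops_minor C K L" "card K = k" "card L = l"
      using not_kl_uniform_iff by blast
    then show "\<exists>F. flat E indep F \<and> rank_of indep F + k = rank_of indep E \<and> \<not> nullity indep F < l"
      using flat_of_coloops_loops_minor[of C K L] by (auto simp: not_less)
  next
    assume "\<exists>F. flat E indep F \<and> rank_of indep F + k = rank_of indep E \<and> \<not> nullity indep F < l"
    then obtain F where "flat E indep F" "rank_of indep F + k = rank_of indep E" "l \<le> nullity indep F"
      by (auto simp: not_less)
    then show "\<not> kl_uniform k l E indep"
      using coloops_loops_minor_of_rank_deficient[of F k l] not_kl_uniform_iff by (auto simp: flat_def)
  qed
  then show ?thesis
    by blast
qed

end
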